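(* In the Com-IC model, for any fixed $\mathcal{B}$-seed set $S_\mathcal{B}$, the function $S_\mathcal{A}\mapsto\sigma_\mathcal{A}(S_\mathcal{A},S_\mathcal{B})$ is monotonically non-decreasing for every GAP vector in $\mathbf{Q}^+\cup\mathbf{Q}^-$. Moreover, for any fixed $\mathcal{A}$-seed set $S_\mathcal{A}$, the function $S_\mathcal{B}\mapsto\sigma_\mathcal{A}(S_\mathcal{A},S_\mathcal{B})$ is monotonically non-decreasing for every GAP vector in $\mathbf{Q}^+$ and monotonically non-increasing for every GAP vector in $\mathbf{Q}^-$.
   Context: Com-IC model. Let $G=(V,E,p)$ be a directed graph with $p:E\to[0,1]$, write $p_{u,v}=p(u,v)$, and $N^-(v)$ for the in-neighbours of $v$. Two items $\mathcal{A},\mathcal{B}$; GAPs $\mathbf{Q}=(q_{\mathcal{A}|\emptyset},q_{\mathcal{A}|\mathcal{B}},q_{\mathcal{B}|\emptyset},q_{\mathcal{B}|\mathcal{A}})\in[0,1]^4$. Given seed sets $S_\mathcal{A},S_\mathcal{B}\subseteq V$, randomness: each edge $(u,v)$ independently live w.p. $p_{u,v}$; each node $v$ independently draws $\alpha^v_\mathcal{A},\alpha^v_\mathcal{B}$ uniform on $[0,1]$, a uniformly random permutation $\pi_v$ of $N^-(v)$, and a fair coin $\tau_v\in\{\mathcal{A},\mathcal{B}\}$. For each item $X$ each node is $X$-idle, $X$-suspended, $X$-adopted or $X$-rejected; initially all idle. At step $0$ nodes of $S_\mathcal{A}$ become $\mathcal{A}$-adopted and nodes of $S_\mathcal{B}$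 become $\mathcal{B}$-adopted (order for nodes in both given by $\tau_v$). At step $t\ge1$, $v$ is informed of $X$ by in-neighbour $u$ if $(u,v)$ is live and $u$ adopted $X$ at step $t-1$; informing in-neighbours are processed in order $\pi_v$ (an in-neighbour that adopted both items is processed for both, in its adoption order). When $v$ is informed of $X$ ($Y$ the other item) while $X$-idle: if $Y$-adopted, $v$ becomes $X$-adopted if $\alpha^v_X\le q_{X|Y}$, else $X$-rejected; otherwise $X$-adopted if $\alpha^v_X\le q_{X|\emptyset}$, else $X$-suspended. Informing a non-$X$-idle node of $X$ has no effect. Reconsideration: when an $X$-suspended node becomes $Y$-adopted, it becomes $X$-adopted if $\alpha^v_X\le q_{X|Y}$, else $X$-rejected. The process stops when nothing changes. $\sigma_\mathcal{A}(S_\mathcal{A},S_\mathcal{B})$ is the expected final number of $\mathcal{A}$-adopted nodes. $\mathbf{Q}^+$: $q_{\mathcal{A}|\emptyset}\le q_{\mathcal{A}|\mathcal{B}}$ and $q_{\mathcal{B}|\emptyset}\le q_{\mathcal{B}|\mathcal{A}}$. $\mathbf{Q}^-$: $q_{\mathcal{A}|\emptyset}\ge q_{\mathcal{A}|\mathcal{B}}$ and $q_{\mathcal{B}|\emptyset}\ge q_{\mathcal{B}|\mathcal{A}}$. *)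

theory Defs
  imports "HOL-Probability.Probability"
begin

datatype item = IA | IB

fun other :: "item \<Rightarrow> item" where
  "other IA = IB"
| "other IB = IA"

datatype status = Idle | Suspended | Adopted | Rejected

text \<open>GAP vector Q = (q_{A|0}, q_{A|B}, q_{B|0}, q_{B|A}).\<close>
type_synonym gap = "real \<times> real \<times> real \<times> real"

fun q_empty :: "gap \<Rightarrow> item \<Rightarrow> real" where
  "q_empty (a, _, _, _) IA = a"
| "q_empty (_, _, b, _) IB = b"

fun q_cond :: "gap \<Rightarrow> item \<Rightarrow> real" where
  "q_cond (_, a, _, _) IA = a"
| "q_cond (_, _, _, b) IB = b"

definition gap_valid :: "gap \<Rightarrow> bool" where
  "gap_valid Q \<longleftrightarrow> (\<forall>X. 0 \<le> q_empty Q X \<and> q_empty Q X \<le> 1 \<and> 0 \<le> q_cond Q X \<and> q_cond Q X \<le> 1)"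

definition gap_Qplus :: "gap \<Rightarrow> bool" where
  "gap_Qplus Q \<longleftrightarrow> q_empty Q IA \<le> q_cond Q IA \<and> q_empty Q IB \<le> q_cond Q IB"

definition gap_Qminus :: "gap \<Rightarrow> bool" where
  "gap_Qminus Q \<longleftrightarrow> q_empty Q IA \<ge> q_cond Q IA \<and> q_empty Q IB \<ge> q_cond Q IB"

text \<open>Local state of a node: its status for each item, together with the list
  (in adoption order) of items it adopted during the current/last step.\<close>
type_synonym local_state = "(item \<Rightarrow> status) \<times> item list"

definition informed :: "gap \<Rightarrow> (item \<Rightarrow> real) \<Rightarrow> item \<Rightarrow> local_state \<Rightarrow> local_state" where
  "informed Q a X = (\<lambda>(s, new). let Y = other X in
     if s X \<noteq> Idle then (s, new)
     else if s Y = Adopted then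
       (if a X \<le> q_cond Q X then (s(X := Adopted), new @ [X]) else (s(X := Rejected), new))
     else if a X \<le> q_empty Q X then
       (if s Y = Suspended then
          (if a Y \<le> q_cond Q Y then (s(X := Adopted, Y := Adopted), new @ [X, Y])
           else (s(X := Adopted, Y := Rejected), new @ [X]))
        else (s(X := Adopted), new @ [X]))
     else (s(X := Suspended), new))"

definition seed_state :: "'v set \<Rightarrow> 'v set \<Rightarrow> ('v \<Rightarrow> item) \<Rightarrow> 'v \<Rightarrow> local_state" where
  "seed_state SA SB tau = (\<lambda>v.
     ((\<lambda>X. if (X = IA \<and> v \<in> SA) \<or> (X = IB \<and> v \<in> SB) then Adopted else Idle),
      (if v \<in> SA \<and> v \<in> SB then (if tau v = IA then [IA, IB] else [IB, IA])
       else if v \<in> SA then [IA] else if v \<in> SB then [IB] else [])))"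

definition comic_step :: "gap \<Rightarrow> ('v \<times> 'v) set \<Rightarrow> ('v \<Rightarrow> 'v list) \<Rightarrow> ('v \<Rightarrow> item \<Rightarrow> real)
    \<Rightarrow> ('v \<Rightarrow> local_state) \<Rightarrow> ('v \<Rightarrow> local_state)" where
  "comic_step Q L perm alpha st = (\<lambda>v.
     fold (informed Q (alpha v))
          (concat (map (\<lambda>u. if (u, v) \<in> L then snd (st u) else []) (perm v)))
          (fst (st v), []))"

fun comic_run :: "gap \<Rightarrow> 'v set \<Rightarrow> 'v set \<Rightarrow> ('v \<times> 'v) set \<Rightarrow> ('v \<Rightarrow> 'v list) \<Rightarrow> ('v \<Rightarrow> item)
    \<Rightarrow> ('v \<Rightarrow> item \<Rightarrow> real) \<Rightarrow> nat \<Rightarrow> ('v \<Rightarrow> local_state)" where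
  "comic_run Q SA SB L perm tau alpha 0 = seed_state SA SB tau"
| "comic_run Q SA SB L perm tau alpha (Suc t) = comic_step Q L perm alpha (comic_run Q SA SB L perm tau alpha t)"

text \<open>Adoption is permanent, so the final set of X-adopted nodes is the set of nodes
  that are X-adopted at some step.\<close>
definition adopted_final :: "gap \<Rightarrow> 'v set \<Rightarrow> 'v set \<Rightarrow> ('v \<times> 'v) set \<Rightarrow> ('v \<Rightarrow> 'v list)
    \<Rightarrow> ('v \<Rightarrow> item) \<Rightarrow> ('v \<Rightarrow> item \<Rightarrow> real) \<Rightarrow> item \<Rightarrow> 'v set" where
  "adopted_final Q SA SB L perm tau alpha X =
     {v. \<exists>t. fst (comic_run Q SA SB L perm tau alpha t v) X = Adopted}"

definition live_pmf :: "('v \<times> 'v) set \<Rightarrow> ('v \<times> 'v \<Rightarrow> real) \<Rightarrow> ('v \<times> 'v) set pmf" where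
  "live_pmf E p = map_pmf (\<lambda>b. {e \<in> E. b e}) (Pi_pmf E False (\<lambda>e. bernoulli_pmf (p e)))"

definition perm_pmf :: "'v set \<Rightarrow> ('v \<times> 'v) set \<Rightarrow> ('v \<Rightarrow> 'v list) pmf" where
  "perm_pmf V E = Pi_pmf V [] (\<lambda>v. pmf_of_set {xs. distinct xs \<and> set xs = {u. (u, v) \<in> E}})"

definition coin_pmf :: "'v set \<Rightarrow> ('v \<Rightarrow> item) pmf" where
  "coin_pmf V = Pi_pmf V IA (\<lambda>_. pmf_of_set {IA, IB})"

definition threshold_measure :: "'v set \<Rightarrow> ('v \<Rightarrow> item \<Rightarrow> real) measure" where
  "threshold_measure V = (\<Pi>\<^sub>M v\<in>V. \<Pi>\<^sub>M X\<in>(UNIV :: item set). uniform_measure lborel {0..1::real})"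

definition comic_space :: "'v set \<Rightarrow> ('v \<times> 'v) set \<Rightarrow> ('v \<times> 'v \<Rightarrow> real)
    \<Rightarrow> (((('v \<times> 'v) set) \<times> ('v \<Rightarrow> 'v list) \<times> ('v \<Rightarrow> item)) \<times> ('v \<Rightarrow> item \<Rightarrow> real)) measure" where
  "comic_space V E p =
     measure_pmf (pair_pmf (live_pmf E p) (pair_pmf (perm_pmf V E) (coin_pmf V)))
       \<Otimes>\<^sub>M threshold_measure V"

definition sigma_A :: "'v set \<Rightarrow> ('v \<times> 'v) set \<Rightarrow> ('v \<times> 'v \<Rightarrow> real) \<Rightarrow> gap
    \<Rightarrow> 'v set \<Rightarrow> 'v set \<Rightarrow> real" where
  "sigma_A V E p Q SA SB =
     (\<integral>\<omega>. (case \<omega> of ((L, perm, tau), alpha) \<Rightarrow>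
              real (card (V \<inter> adopted_final Q SA SB L perm tau alpha IA)))
      \<partial>comic_space V E p)"

end

(*
  Both monotonicity statements hold in every possible world: for fixed live edges, orders, coins
  and thresholds, the final set of A-adopters moves in the claimed direction, and integrating
  gives the statement about expectations.

  Under complementary GAPs a node's statuses are a monotone function of its seeds and of the
  items it has been informed of, so more seeds lead to more informed items, hence to more
  adoptions of both items.

  Under competitive GAPs we couple a world with its variant in which one item X has more seeds and
  the other item Y the same seeds, and show that X spreads further and Y less far.  The delicate
  case is a node informed of both items in the same step: it must not be informed of X first in
  the original world but of Y first in the variant.  As in-neighbours are processed in the same
  order in both worlds, this follows from the same invariant for the order in which the
  in-neighbours adopted the two items, which is carried along the induction.
*)

theory Submission
  imports Defs
begin

lemma other_other [simp]: "other (other X) = X"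
  by (cases X) auto

lemma other_neq [simp]: "other X \<noteq> X" "X \<noteq> other X"
  by (cases X; simp)+

lemma eq_other_if_neq: "Y \<noteq> X \<Longrightarrow> Y = other X"
  by (cases X; cases Y) auto

lemma all_item_iff: "(\<forall>Z. P Z) \<longleftrightarrow> P IA \<and> P IB"
  by (metis item.exhaust)

lemma informed_not_idle_noop: "fst st X \<noteq> Idle \<Longrightarrow> informed Q a X st = st"
  by (cases st) (simp add: informed_def)

lemma informed_not_idle_iff:
  "fst (informed Q a Y st) X \<noteq> Idle \<longleftrightarrow> fst st X \<noteq> Idle \<or> X = Y"
  by (cases st; cases X; cases Y) (auto simp: informed_def Let_def)

lemma informed_new_mono: "set (snd st) \<subseteq> set (snd (informed Q a Y st))"
  by (cases st; cases Y) (auto simp: informed_def Let_def)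

lemma informed_adopted_iff:
  assumes "\<forall>Z\<in>set (snd st). fst st Z = Adopted"
  shows "fst (informed Q a Y st) X = Adopted \<longleftrightarrow> fst st X = Adopted \<or> X \<in> set (snd (informed Q a Y st))"
  using assms by (cases st; cases X; cases Y) (auto simp: informed_def Let_def)

lemma fold_informed_not_idle_iff:
  "fst (fold (informed Q a) xs st) X \<noteq> Idle \<longleftrightarrow> fst st X \<noteq> Idle \<or> X \<in> set xs"
proof (induction xs arbitrary: st)
  case (Cons Y xs)
  show ?case using Cons.IH[of "informed Q a Y st"] informed_not_idle_iff[of Q a Y st X] by auto
qed simp

lemma fold_informed_new_mono: "set (snd st) \<subseteq> set (snd (fold (informed Q a) xs st))"
  by (induction xs arbitrary: st) (use informed_new_mono in fastforce)+

lemma fold_informed_adopted_iff: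
  assumes "\<forall>Z\<in>set (snd st). fst st Z = Adopted"
  shows "fst (fold (informed Q a) xs st) X = Adopted \<longleftrightarrow>
    fst st X = Adopted \<or> X \<in> set (snd (fold (informed Q a) xs st))"
  using assms
proof (induction xs arbitrary: st)
  case (Cons Y xs)
  let ?st' = "informed Q a Y st"
  have "\<forall>Z\<in>set (snd ?st'). fst ?st' Z = Adopted"
    using informed_adopted_iff[OF Cons.prems] by blast
  then show ?case
    using Cons.IH informed_adopted_iff[OF Cons.prems] fold_informed_new_mono[of ?st' Q a xs]
    by auto
qed auto

definition first_occurrences :: "item list \<Rightarrow> item list" where
  "first_occurrences xs =
     (case xs of [] \<Rightarrow> [] | X # ys \<Rightarrow> X # (if other X \<in> set ys then [other X] else []))"

lemma first_occurrences_cases: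
  "first_occurrences xs \<in> {[], [IA], [IB], [IA, IB], [IB, IA]}"
  by (cases xs; cases "hd xs") (auto simp: first_occurrences_def)

lemma set_first_occurrences [simp]: "set (first_occurrences xs) = set xs"
  by (cases xs) (auto simp: first_occurrences_def dest: eq_other_if_neq)

lemma first_occurrences_eq_Nil_iff [simp]: "first_occurrences xs = [] \<longleftrightarrow> xs = []"
  by (cases xs) (auto simp: first_occurrences_def)

lemma hd_first_occurrences [simp]: "hd (first_occurrences xs) = hd xs"
  by (cases xs) (auto simp: first_occurrences_def)

lemma fold_informed_after_not_idle:
  assumes "fst st X \<noteq> Idle"
  shows "fold (informed Q a) ys st = (if other X \<in> set ys then informed Q a (other X) st else st)"
  using assms
proof (induction ys arbitrary: st)
  case (Cons Y ys)
  show ?case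
  proof (cases "Y = X")
    case True
    then show ?thesis using Cons by (auto simp: informed_not_idle_noop)
  next
    case False
    let ?st' = "informed Q a (other X) st"
    have "fst ?st' Z \<noteq> Idle" for Z
      using Cons.prems informed_not_idle_iff[of Q a "other X" st Z] eq_other_if_neq[of Z X] by auto
    then have "fold (informed Q a) ys ?st' = ?st'"
      by (intro fold_invariant[where P="\<lambda>st''. st'' = ?st'"]) (auto simp: informed_not_idle_noop)
    then show ?thesis using False eq_other_if_neq[OF False] by simp
  qed
qed simp

text \<open>Once a node has been informed of an item, being informed of it again has no effect.\<close>

lemma fold_informed_first_occurrences:
  "fold (informed Q a) (first_occurrences xs) st = fold (informed Q a) xs st"
proof (cases xs)
  case (Cons X ys)
  have "fst (informed Q a X st) X \<noteq> Idle"
    by (simp add: informed_not_idle_iff)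
  from fold_informed_after_not_idle[OF this, where ys = ys] show ?thesis
    using Cons by (auto simp: first_occurrences_def)
qed (simp add: first_occurrences_def)

definition seeds :: "'v set \<Rightarrow> 'v set \<Rightarrow> item \<Rightarrow> 'v set" where
  "seeds SA SB X = (case X of IA \<Rightarrow> SA | IB \<Rightarrow> SB)"

locale comic_world =
  fixes Q :: gap and SA SB :: "'v set" and L :: "('v \<times> 'v) set" and perm :: "'v \<Rightarrow> 'v list"
    and tau :: "'v \<Rightarrow> item" and alpha :: "'v \<Rightarrow> item \<Rightarrow> real"
begin

abbreviation state :: "nat \<Rightarrow> 'v \<Rightarrow> local_state" where
  "state t \<equiv> comic_run Q SA SB L perm tau alpha t"

definition sent :: "nat \<Rightarrow> 'v \<Rightarrow> 'v \<Rightarrow> item list" where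
  "sent t u v = (if (u, v) \<in> L then snd (state t u) else [])"

definition incoming :: "nat \<Rightarrow> 'v \<Rightarrow> item list" where
  "incoming t v = concat (map (\<lambda>u. sent t u v) (perm v))"

lemma state_Suc: "state (Suc t) v = fold (informed Q (alpha v)) (incoming t v) (fst (state t v), [])"
  by (simp add: comic_step_def incoming_def sent_def)

lemma incoming_iff:
  "X \<in> set (incoming t v) \<longleftrightarrow> (\<exists>u\<in>set (perm v). (u, v) \<in> L \<and> X \<in> set (snd (state t u)))"
  by (auto simp: incoming_def sent_def)

lemma state_0_adopted_iff: "fst (state 0 v) X = Adopted \<longleftrightarrow> v \<in> seeds SA SB X"
  and state_0_not_idle_iff: "fst (state 0 v) X \<noteq> Idle \<longleftrightarrow> v \<in> seeds SA SB X"
  and new_state_0_iff: "X \<in> set (snd (state 0 v)) \<longleftrightarrow> v \<in> seeds SA SB X"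
  by (cases X; auto simp: seed_state_def seeds_def)+

lemma new_state_0_both:
  "v \<in> SA \<Longrightarrow> v \<in> SB \<Longrightarrow> snd (state 0 v) = (if tau v = IA then [IA, IB] else [IB, IA])"
  by (simp add: seed_state_def)

declare comic_run.simps [simp del]

lemma state_Suc_not_idle_iff:
  "fst (state (Suc t) v) X \<noteq> Idle \<longleftrightarrow> fst (state t v) X \<noteq> Idle \<or> X \<in> set (incoming t v)"
  unfolding state_Suc by (simp add: fold_informed_not_idle_iff)

lemma new_items_adopted: "X \<in> set (snd (state t v)) \<Longrightarrow> fst (state t v) X = Adopted"
proof (induction t)
  case 0
  then show ?case by (simp add: state_0_adopted_iff new_state_0_iff)
next
  case (Suc t)
  then show ?case
    unfolding state_Suc using fold_informed_adopted_iff[of "(fst (state t v), [])"] by auto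
qed

lemma state_Suc_adopted_iff:
  "fst (state (Suc t) v) X = Adopted \<longleftrightarrow>
     fst (state t v) X = Adopted \<or> X \<in> set (snd (state (Suc t) v))"
  using fold_informed_adopted_iff[of "(fst (state t v), [])"] by (simp add: state_Suc)

lemma not_idle_mono: "t \<le> t' \<Longrightarrow> fst (state t v) X \<noteq> Idle \<Longrightarrow> fst (state t' v) X \<noteq> Idle"
  by (induction t' rule: dec_induct) (auto simp: state_Suc_not_idle_iff)

text \<open>Membership in the list component means that \<open>u\<close> adopted \<open>X\<close> in step \<open>t\<close>, so that \<open>v\<close> is
  informed of it in step \<open>t + 1\<close>.\<close>

lemma adopted_informs:
  assumes "fst (state t u) X = Adopted" "(u, v) \<in> L" "u \<in> set (perm v)"
  shows "X \<in> set (snd (state t u)) \<or> fst (state t v) X \<noteq> Idle"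
  using assms(1)
proof (induction t)
  case 0
  then show ?case by (simp add: state_0_adopted_iff new_state_0_iff)
next
  case (Suc t)
  have "fst (state (Suc t) v) X \<noteq> Idle" if "fst (state t u) X = Adopted"
    using Suc.IH[OF that] assms(2,3) by (auto simp: state_Suc_not_idle_iff incoming_iff)
  then show ?case using Suc.prems state_Suc_adopted_iff by blast
qed

lemma state_Suc_not_idle_iff_adopted_neighbour:
  "fst (state (Suc t) v) X \<noteq> Idle \<longleftrightarrow>
     v \<in> seeds SA SB X \<or> (\<exists>u\<in>set (perm v). (u, v) \<in> L \<and> fst (state t u) X = Adopted)"
proof
  assume "v \<in> seeds SA SB X \<or> (\<exists>u\<in>set (perm v). (u, v) \<in> L \<and> fst (state t u) X = Adopted)"
  then show "fst (state (Suc t) v) X \<noteq> Idle"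
  proof
    assume "v \<in> seeds SA SB X"
    then show ?thesis using not_idle_mono[of 0 "Suc t" v X] by (simp add: state_0_not_idle_iff)
  next
    assume "\<exists>u\<in>set (perm v). (u, v) \<in> L \<and> fst (state t u) X = Adopted"
    then obtain u where u: "u \<in> set (perm v)" "(u, v) \<in> L" "fst (state t u) X = Adopted"
      by blast
    from adopted_informs[OF u(3) u(2) u(1)] show ?thesis
      using u by (auto simp: state_Suc_not_idle_iff incoming_iff)
  qed
next
  show "fst (state (Suc t) v) X \<noteq> Idle \<Longrightarrow>
    v \<in> seeds SA SB X \<or> (\<exists>u\<in>set (perm v). (u, v) \<in> L \<and> fst (state t u) X = Adopted)"
  proof (induction t)
    case 0
    then show ?case
      by (auto simp: state_Suc_not_idle_iff state_0_not_idle_iff incoming_iff new_items_adopted)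
  next
    case (Suc t)
    from Suc.prems consider "fst (state (Suc t) v) X \<noteq> Idle" | "X \<in> set (incoming (Suc t) v)"
      using state_Suc_not_idle_iff by blast
    then show ?case
    proof cases
      case 1
      then show ?thesis using Suc.IH state_Suc_adopted_iff by blast
    next
      case 2
      then show ?thesis using new_items_adopted by (auto simp: incoming_iff)
    qed
  qed
qed

end

section \<open>Complementary GAPs\<close>

definition adopts_alone :: "gap \<Rightarrow> (item \<Rightarrow> real) \<Rightarrow> (item \<Rightarrow> bool) \<Rightarrow> (item \<Rightarrow> status) \<Rightarrow> item \<Rightarrow> bool" where
  "adopts_alone Q a seeded s Z \<longleftrightarrow> seeded Z \<or> (s Z \<noteq> Idle \<and> a Z \<le> q_empty Q Z)"

text \<open>Under \<open>Q\<^sup>+\<close> the statuses of a node are determined by its seeds, its thresholds and the set of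
  items it has been informed of: an item is adopted iff it is adopted on its own or, once informed,
  in response to the other item being adopted on its own.\<close>

definition qplus_consistent :: "gap \<Rightarrow> (item \<Rightarrow> real) \<Rightarrow> (item \<Rightarrow> bool) \<Rightarrow> (item \<Rightarrow> status) \<Rightarrow> bool" where
  "qplus_consistent Q a seeded s \<longleftrightarrow>
     (\<forall>Z. seeded Z \<longrightarrow> s Z = Adopted) \<and> (\<forall>Z. s Z = Rejected \<longrightarrow> \<not> a Z \<le> q_cond Q Z) \<and>
     (\<forall>Z. s Z = Adopted \<longleftrightarrow>
        adopts_alone Q a seeded s Z \<or>
        (s Z \<noteq> Idle \<and> a Z \<le> q_cond Q Z \<and> adopts_alone Q a seeded s (other Z)))"

lemma qplus_consistent_informed:
  assumes "gap_Qplus Q" "qplus_consistent Q a seeded (fst st)"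
  shows "qplus_consistent Q a seeded (fst (informed Q a X st))"
proof -
  obtain s new where st: "st = (s, new)" by (cases st)
  show ?thesis using assms unfolding st
    by (cases X; cases "s IA"; cases "s IB")
      (auto simp: qplus_consistent_def adopts_alone_def informed_def Let_def gap_Qplus_def all_item_iff)
qed

lemma qplus_consistent_adopted_mono:
  assumes "qplus_consistent Q a seeded s" "qplus_consistent Q a seeded' s'"
    "\<forall>Z. seeded Z \<longrightarrow> seeded' Z" "\<forall>Z. s Z \<noteq> Idle \<longrightarrow> s' Z \<noteq> Idle"
    "s X = Adopted"
  shows "s' X = Adopted"
  using assms unfolding qplus_consistent_def adopts_alone_def by metis

lemma (in comic_world) qplus_consistent_state:
  assumes "gap_Qplus Q"
  shows "qplus_consistent Q (alpha v) (\<lambda>Z. v \<in> seeds SA SB Z) (fst (state t v))"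
proof (induction t)
  case 0
  show ?case
    by (auto simp: qplus_consistent_def adopts_alone_def all_item_iff comic_run.simps
        seed_state_def seeds_def)
next
  case (Suc t)
  then show ?case
    unfolding state_Suc using qplus_consistent_informed[OF assms]
    by (intro fold_invariant[where P="\<lambda>st. qplus_consistent Q (alpha v) _ (fst st)"]) auto
qed

text \<open>Induction on time: more informed items give more adoptions, which give more informed items.\<close>

lemma qplus_adopted_mono:
  assumes "gap_Qplus Q" "SA \<subseteq> TA" "SB \<subseteq> TB"
    and "fst (comic_run Q SA SB L perm tau alpha t v) X = Adopted"
  shows "fst (comic_run Q TA TB L perm tau alpha t v) X = Adopted"
proof -
  interpret w: comic_world Q SA SB L perm tau alpha .
  interpret w': comic_world Q TA TB L perm tau alpha .
  have seeds_mono: "v \<in> seeds SA SB Z \<Longrightarrow> v \<in> seeds TA TB Z" for v Z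
    using assms(2,3) by (cases Z) (auto simp: seeds_def)
  have adopted: "fst (w.state t v) Z = Adopted \<Longrightarrow> fst (w'.state t v) Z = Adopted"
    if "\<forall>v Z. fst (w.state t v) Z \<noteq> Idle \<longrightarrow> fst (w'.state t v) Z \<noteq> Idle" for t v Z
    using qplus_consistent_adopted_mono[OF w.qplus_consistent_state[OF assms(1)]
        w'.qplus_consistent_state[OF assms(1)]] seeds_mono that
    by blast
  have "\<forall>v Z. fst (w.state t v) Z \<noteq> Idle \<longrightarrow> fst (w'.state t v) Z \<noteq> Idle" for t
  proof (induction t)
    case 0
    then show ?case using seeds_mono by (simp add: w.state_0_not_idle_iff w'.state_0_not_idle_iff)
  next
    case (Suc t)
    then show ?case
      using seeds_mono adopted[OF Suc.IH]
      unfolding w.state_Suc_not_idle_iff_adopted_neighbour w'.state_Suc_not_idle_iff_adopted_neighbour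
      by blast
  qed
  then show ?thesis using adopted assms(4) by blast
qed

section \<open>Competitive GAPs\<close>

definition qminus_consistent :: "gap \<Rightarrow> (item \<Rightarrow> real) \<Rightarrow> (item \<Rightarrow> bool) \<Rightarrow> (item \<Rightarrow> status) \<Rightarrow> bool" where
  "qminus_consistent Q a seeded s \<longleftrightarrow> (\<forall>Z.
     (seeded Z \<longrightarrow> s Z = Adopted) \<and>
     (s Z = Suspended \<longrightarrow> \<not> a Z \<le> q_empty Q Z \<and> s (other Z) \<noteq> Adopted) \<and>
     (s Z = Rejected \<longrightarrow> \<not> a Z \<le> q_cond Q Z \<and> (a Z \<le> q_empty Q Z \<longrightarrow> s (other Z) = Adopted)) \<and>
     (s Z = Adopted \<longrightarrow> seeded Z \<or> a Z \<le> q_empty Q Z))"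

lemma qminus_consistent_informed:
  assumes "gap_Qminus Q" "qminus_consistent Q a seeded (fst st)"
  shows "qminus_consistent Q a seeded (fst (informed Q a X st))"
proof -
  obtain s new where st: "st = (s, new)" by (cases st)
  show ?thesis using assms unfolding st
    by (cases X; cases "s IA"; cases "s IB")
      (auto simp: qminus_consistent_def informed_def Let_def gap_Qminus_def all_item_iff)
qed

lemma (in comic_world) qminus_consistent_state:
  assumes "gap_Qminus Q"
  shows "qminus_consistent Q (alpha v) (\<lambda>Z. v \<in> seeds SA SB Z) (fst (state t v))"
proof (induction t)
  case 0
  show ?case by (auto simp: qminus_consistent_def all_item_iff comic_run.simps seed_state_def seeds_def)
next
  case (Suc t)
  then show ?case
    unfolding state_Suc using qminus_consistent_informed[OF assms]
    by (intro fold_invariant[where P="\<lambda>st. qminus_consistent Q (alpha v) _ (fst st)"]) auto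
qed

text \<open>Whether item \<open>Y\<close> is adopted before the node processes the other item in a step that
  informs it of the items \<open>d\<close>, in this order.\<close>

definition adopts_first :: "gap \<Rightarrow> (item \<Rightarrow> real) \<Rightarrow> (item \<Rightarrow> status) \<Rightarrow> item list \<Rightarrow> item \<Rightarrow> bool" where
  "adopts_first Q a s d Y \<longleftrightarrow> s Y = Adopted \<or> (s Y = Idle \<and> Y \<in> set d \<and> hd d = Y \<and> a Y \<le> q_empty Q Y)"

lemma qminus_step_adopted_iff:
  assumes "gap_Qminus Q" "qminus_consistent Q a seeded s"
    and "d \<in> {[], [IA], [IB], [IA, IB], [IB, IA]}"
  shows "fst (fold (informed Q a) d (s, [])) X = Adopted \<longleftrightarrow>
    s X = Adopted \<or> (s X = Idle \<and> X \<in> set d \<and>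
      (a X \<le> q_cond Q X \<or> (a X \<le> q_empty Q X \<and> \<not> adopts_first Q a s d (other X))))"
  using assms unfolding qminus_consistent_def all_item_iff gap_Qminus_def
  by (elim insertE emptyE; cases X; cases "s IA"; cases "s IB")
    (simp_all add: informed_def adopts_first_def)

lemma qminus_step_new_both:
  assumes "gap_Qminus Q" "qminus_consistent Q a seeded s"
    and "d \<in> {[], [IA], [IB], [IA, IB], [IB, IA]}"
    and "X \<in> set (snd (fold (informed Q a) d (s, [])))"
    and "other X \<in> set (snd (fold (informed Q a) d (s, [])))"
  shows "hd (snd (fold (informed Q a) d (s, []))) = hd d \<and> s X = Idle \<and> s (other X) = Idle \<and> d \<noteq> []"
  using assms unfolding qminus_consistent_def all_item_iff gap_Qminus_def
  by (elim insertE emptyE; cases X; cases "s IA"; cases "s IB")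
    (simp_all add: informed_def split: if_splits)

text \<open>One step at a single node in two coupled worlds, the second favouring \<open>X\<close> over the other item.  The situation is symmetric under
  exchanging the worlds and the items.\<close>

locale qminus_coupled_node =
  fixes Q :: gap and a :: "item \<Rightarrow> real" and seeded\<^sub>1 seeded\<^sub>2 :: "item \<Rightarrow> bool"
    and s\<^sub>1 s\<^sub>2 :: "item \<Rightarrow> status" and d\<^sub>1 d\<^sub>2 :: "item list" and X :: item
  assumes Qminus: "gap_Qminus Q"
    and consistent\<^sub>1: "qminus_consistent Q a seeded\<^sub>1 s\<^sub>1"
    and consistent\<^sub>2: "qminus_consistent Q a seeded\<^sub>2 s\<^sub>2"
    and X_adopted: "s\<^sub>1 X = Adopted \<longrightarrow> s\<^sub>2 X = Adopted"
    and Y_adopted: "s\<^sub>2 (other X) = Adopted \<longrightarrow> s\<^sub>1 (other X) = Adopted"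
    and X_not_idle: "s\<^sub>1 X \<noteq> Idle \<longrightarrow> s\<^sub>2 X \<noteq> Idle"
    and Y_not_idle: "s\<^sub>2 (other X) \<noteq> Idle \<longrightarrow> s\<^sub>1 (other X) \<noteq> Idle"
    and X_informed: "X \<in> set d\<^sub>1 \<longrightarrow> X \<in> set d\<^sub>2 \<or> s\<^sub>2 X \<noteq> Idle"
    and Y_informed: "other X \<in> set d\<^sub>2 \<longrightarrow> other X \<in> set d\<^sub>1 \<or> s\<^sub>1 (other X) \<noteq> Idle"
    and order: "s\<^sub>2 X = Idle \<and> s\<^sub>1 (other X) = Idle \<longrightarrow>
      \<not> (d\<^sub>1 \<noteq> [] \<and> hd d\<^sub>1 = X \<and> d\<^sub>2 \<noteq> [] \<and> hd d\<^sub>2 = other X)"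
    and d\<^sub>1: "d\<^sub>1 \<in> {[], [IA], [IB], [IA, IB], [IB, IA]}"
    and d\<^sub>2: "d\<^sub>2 \<in> {[], [IA], [IB], [IA, IB], [IB, IA]}"
begin

abbreviation "Y \<equiv> other X"
abbreviation "r\<^sub>1 \<equiv> fold (informed Q a) d\<^sub>1 (s\<^sub>1, [])"
abbreviation "r\<^sub>2 \<equiv> fold (informed Q a) d\<^sub>2 (s\<^sub>2, [])"

lemma swap: "qminus_coupled_node Q a seeded\<^sub>2 seeded\<^sub>1 s\<^sub>2 s\<^sub>1 d\<^sub>2 d\<^sub>1 Y"
  using Qminus consistent\<^sub>1 consistent\<^sub>2 X_adopted Y_adopted X_not_idle Y_not_idle
    X_informed Y_informed order d\<^sub>1 d\<^sub>2
  by unfold_locales auto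

lemma q_cond_le_q_empty: "q_cond Q Z \<le> q_empty Q Z"
  using Qminus by (cases Z) (auto simp: gap_Qminus_def)

lemma consistent_status:
  assumes "qminus_consistent Q a seeded s"
  shows "s Z = Suspended \<Longrightarrow> \<not> a Z \<le> q_empty Q Z"
    and "s Z = Rejected \<Longrightarrow> \<not> a Z \<le> q_cond Q Z"
    and "s Z = Rejected \<Longrightarrow> a Z \<le> q_empty Q Z \<Longrightarrow> s (other Z) = Adopted"
  using assms unfolding qminus_consistent_def by blast+

lemma adopts_first_transfer:
  assumes "s\<^sub>1 X = Idle" "s\<^sub>2 X = Idle" "X \<in> set d\<^sub>1"
    and "adopts_first Q a s\<^sub>2 d\<^sub>2 Y"
  shows "adopts_first Q a s\<^sub>1 d\<^sub>1 Y"
proof (cases "s\<^sub>2 Y = Adopted")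
  case True
  then show ?thesis using Y_adopted by (simp add: adopts_first_def)
next
  case False
  with assms(4) have Y\<^sub>2: "s\<^sub>2 Y = Idle" "Y \<in> set d\<^sub>2" "hd d\<^sub>2 = Y" "a Y \<le> q_empty Q Y"
    by (auto simp: adopts_first_def)
  have "s\<^sub>1 Y \<noteq> Suspended" and "s\<^sub>1 Y \<noteq> Rejected"
    using consistent_status[OF consistent\<^sub>1, of Y] Y\<^sub>2(4) assms(1) by auto
  then have "s\<^sub>1 Y = Idle \<or> s\<^sub>1 Y = Adopted" by (cases "s\<^sub>1 Y") auto
  then show ?thesis
  proof
    assume idle: "s\<^sub>1 Y = Idle"
    then have "Y \<in> set d\<^sub>1" using Y_informed Y\<^sub>2(2) by blast
    moreover have "hd d\<^sub>1 = Y"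
      using order idle assms(2,3) Y\<^sub>2(2,3) eq_other_if_neq[of "hd d\<^sub>1" X] by force
    ultimately show ?thesis using idle Y\<^sub>2(4) by (simp add: adopts_first_def)
  qed (simp add: adopts_first_def)
qed

lemma X_adopted_step: "fst r\<^sub>1 X = Adopted \<Longrightarrow> fst r\<^sub>2 X = Adopted"
proof -
  assume adopted\<^sub>1: "fst r\<^sub>1 X = Adopted"
  note step\<^sub>1 = qminus_step_adopted_iff[OF Qminus consistent\<^sub>1 d\<^sub>1, of X]
    and step\<^sub>2 = qminus_step_adopted_iff[OF Qminus consistent\<^sub>2 d\<^sub>2, of X]
  show ?thesis
  proof (cases "s\<^sub>1 X = Adopted")
    case True
    then show ?thesis using X_adopted step\<^sub>2 by blast
  next
    case False
    with adopted\<^sub>1 step\<^sub>1 have idle\<^sub>1: "s\<^sub>1 X = Idle" and X\<^sub>1: "X \<in> set d\<^sub>1"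
      and cond: "a X \<le> q_cond Q X \<or> (a X \<le> q_empty Q X \<and> \<not> adopts_first Q a s\<^sub>1 d\<^sub>1 Y)"
      by auto
    have empty: "a X \<le> q_empty Q X" using cond q_cond_le_q_empty[of X] by auto
    consider "s\<^sub>2 X = Idle" | "s\<^sub>2 X = Adopted" | "s\<^sub>2 X = Suspended" | "s\<^sub>2 X = Rejected"
      by (cases "s\<^sub>2 X") auto
    then show ?thesis
    proof cases
      case 1
      then have "X \<in> set d\<^sub>2" using X_informed X\<^sub>1 by blast
      then show ?thesis
        using 1 step\<^sub>2 cond adopts_first_transfer[OF idle\<^sub>1 1 X\<^sub>1] by auto
    next
      case 2
      then show ?thesis using step\<^sub>2 by blast
    next
      case 3
      then show ?thesis using consistent_status(1)[OF consistent\<^sub>2] empty by blast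
    next
      case 4
      then have "s\<^sub>1 Y = Adopted" using consistent_status(3)[OF consistent\<^sub>2 4 empty] Y_adopted by simp
      then show ?thesis
        using cond consistent_status(2)[OF consistent\<^sub>2 4] by (auto simp: adopts_first_def)
    qed
  qed
qed

lemma Y_adopted_step: "fst r\<^sub>2 Y = Adopted \<Longrightarrow> fst r\<^sub>1 Y = Adopted"
  using qminus_coupled_node.X_adopted_step[OF swap] .

lemma X_not_idle_step: "fst r\<^sub>1 X \<noteq> Idle \<Longrightarrow> fst r\<^sub>2 X \<noteq> Idle"
  using X_informed X_not_idle by (auto simp: fold_informed_not_idle_iff)

lemma Y_not_idle_step: "fst r\<^sub>2 Y \<noteq> Idle \<Longrightarrow> fst r\<^sub>1 Y \<noteq> Idle"
  using qminus_coupled_node.X_not_idle_step[OF swap] .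

lemma order_step:
  assumes "X \<in> set (snd r\<^sub>1)" "Y \<in> set (snd r\<^sub>1)" "X \<in> set (snd r\<^sub>2)" "Y \<in> set (snd r\<^sub>2)"
  shows "\<not> (hd (snd r\<^sub>1) = X \<and> hd (snd r\<^sub>2) = Y)"
  using qminus_step_new_both[OF Qminus consistent\<^sub>1 d\<^sub>1 assms(1,2)]
    qminus_step_new_both[OF Qminus consistent\<^sub>2 d\<^sub>2 assms(3,4)] order
  by auto

end

lemma hd_concat_not_swapped:
  assumes "\<forall>u\<in>set us. X \<in> set (f\<^sub>1 u) \<longrightarrow> X \<in> set (f\<^sub>2 u)"
    and "\<forall>u\<in>set us. Y \<in> set (f\<^sub>2 u) \<longrightarrow> Y \<in> set (f\<^sub>1 u)"
    and "\<forall>u\<in>set us. X \<in> set (f\<^sub>1 u) \<and> Y \<in> set (f\<^sub>1 u) \<and> X \<in> set (f\<^sub>2 u) \<and> Y \<in> set (f\<^sub>2 u) \<longrightarrow>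
      \<not> (hd (f\<^sub>1 u) = X \<and> hd (f\<^sub>2 u) = Y)"
  shows "\<not> (concat (map f\<^sub>1 us) \<noteq> [] \<and> hd (concat (map f\<^sub>1 us)) = X \<and>
    concat (map f\<^sub>2 us) \<noteq> [] \<and> hd (concat (map f\<^sub>2 us)) = Y)"
  using assms
proof (induction us)
  case (Cons u us)
  then show ?case
    by (cases "f\<^sub>1 u = []"; cases "f\<^sub>2 u = []") (auto simp: hd_append)
qed simp

text \<open>The last clause rules out that in the same step the node adopts \<open>X\<close> first in the first world
  but the other item first in the second.\<close>

definition qminus_coupled :: "item \<Rightarrow> local_state \<Rightarrow> local_state \<Rightarrow> bool" where
  "qminus_coupled X st\<^sub>1 st\<^sub>2 \<longleftrightarrow>
     (fst st\<^sub>1 X = Adopted \<longrightarrow> fst st\<^sub>2 X = Adopted) \<and>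
     (fst st\<^sub>2 (other X) = Adopted \<longrightarrow> fst st\<^sub>1 (other X) = Adopted) \<and>
     (fst st\<^sub>1 X \<noteq> Idle \<longrightarrow> fst st\<^sub>2 X \<noteq> Idle) \<and>
     (fst st\<^sub>2 (other X) \<noteq> Idle \<longrightarrow> fst st\<^sub>1 (other X) \<noteq> Idle) \<and>
     (X \<in> set (snd st\<^sub>1) \<and> other X \<in> set (snd st\<^sub>1) \<and> X \<in> set (snd st\<^sub>2) \<and> other X \<in> set (snd st\<^sub>2) \<longrightarrow>
        \<not> (hd (snd st\<^sub>1) = X \<and> hd (snd st\<^sub>2) = other X))"

locale qminus_coupled_worlds =
  w\<^sub>1: comic_world Q SA SB L perm tau alpha + w\<^sub>2: comic_world Q TA TB L perm tau alpha
  for Q SA SB TA TB L perm tau alpha +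
  fixes X :: item
  assumes Qminus: "gap_Qminus Q"
    and seeds_X: "seeds SA SB X \<subseteq> seeds TA TB X"
    and seeds_Y: "seeds SA SB (other X) = seeds TA TB (other X)"
begin

lemma coupled_0: "qminus_coupled X (w\<^sub>1.state 0 v) (w\<^sub>2.state 0 v)"
proof -
  have "snd (w\<^sub>1.state 0 v) = snd (w\<^sub>2.state 0 v)"
    if "X \<in> set (snd (w\<^sub>1.state 0 v))" "other X \<in> set (snd (w\<^sub>1.state 0 v))"
  proof -
    have "v \<in> seeds SA SB X" "v \<in> seeds SA SB (other X)"
      using that by (simp_all add: w\<^sub>1.new_state_0_iff)
    then have "v \<in> SA" "v \<in> SB" "v \<in> TA" "v \<in> TB"
      using seeds_X seeds_Y by (cases X; auto simp: seeds_def)+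
    then show ?thesis using w\<^sub>1.new_state_0_both w\<^sub>2.new_state_0_both by simp
  qed
  then show ?thesis
    using seeds_X seeds_Y
    unfolding qminus_coupled_def w\<^sub>1.state_0_adopted_iff w\<^sub>2.state_0_adopted_iff
      w\<^sub>1.state_0_not_idle_iff w\<^sub>2.state_0_not_idle_iff
    by (metis other_neq(1) subsetD)
qed

context
  fixes t :: nat
  assumes coupled_t: "\<And>u. qminus_coupled X (w\<^sub>1.state t u) (w\<^sub>2.state t u)"
begin

lemma X_informs:
  assumes "u \<in> set (perm v)" "(u, v) \<in> L" "X \<in> set (snd (w\<^sub>1.state t u))"
  shows "X \<in> set (snd (w\<^sub>2.state t u)) \<or> fst (w\<^sub>2.state t v) X \<noteq> Idle"
  using coupled_t[of u] w\<^sub>1.new_items_adopted[OF assms(3)] w\<^sub>2.adopted_informs[OF _ assms(2,1)]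
  by (auto simp: qminus_coupled_def)

lemma Y_informs:
  assumes "u \<in> set (perm v)" "(u, v) \<in> L" "other X \<in> set (snd (w\<^sub>2.state t u))"
  shows "other X \<in> set (snd (w\<^sub>1.state t u)) \<or> fst (w\<^sub>1.state t v) (other X) \<noteq> Idle"
  using coupled_t[of u] w\<^sub>2.new_items_adopted[OF assms(3)] w\<^sub>1.adopted_informs[OF _ assms(2,1)]
  by (auto simp: qminus_coupled_def)

lemma incoming_order:
  assumes "fst (w\<^sub>2.state t v) X = Idle" "fst (w\<^sub>1.state t v) (other X) = Idle"
  shows "\<not> (w\<^sub>1.incoming t v \<noteq> [] \<and> hd (w\<^sub>1.incoming t v) = X \<and>
    w\<^sub>2.incoming t v \<noteq> [] \<and> hd (w\<^sub>2.incoming t v) = other X)"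
  unfolding w\<^sub>1.incoming_def w\<^sub>2.incoming_def
proof (rule hd_concat_not_swapped)
  show "\<forall>u\<in>set (perm v). X \<in> set (w\<^sub>1.sent t u v) \<longrightarrow> X \<in> set (w\<^sub>2.sent t u v)"
    using assms X_informs by (auto simp: w\<^sub>1.sent_def w\<^sub>2.sent_def)
  show "\<forall>u\<in>set (perm v). other X \<in> set (w\<^sub>2.sent t u v) \<longrightarrow> other X \<in> set (w\<^sub>1.sent t u v)"
    using assms Y_informs by (auto simp: w\<^sub>1.sent_def w\<^sub>2.sent_def)
  show "\<forall>u\<in>set (perm v).
      X \<in> set (w\<^sub>1.sent t u v) \<and> other X \<in> set (w\<^sub>1.sent t u v) \<and>
      X \<in> set (w\<^sub>2.sent t u v) \<and> other X \<in> set (w\<^sub>2.sent t u v) \<longrightarrow>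
      \<not> (hd (w\<^sub>1.sent t u v) = X \<and> hd (w\<^sub>2.sent t u v) = other X)"
    using coupled_t by (auto simp: qminus_coupled_def w\<^sub>1.sent_def w\<^sub>2.sent_def)
qed

lemma coupled_Suc: "qminus_coupled X (w\<^sub>1.state (Suc t) v) (w\<^sub>2.state (Suc t) v)"
proof -
  let ?s\<^sub>1 = "fst (w\<^sub>1.state t v)" and ?s\<^sub>2 = "fst (w\<^sub>2.state t v)"
  let ?i\<^sub>1 = "w\<^sub>1.incoming t v" and ?i\<^sub>2 = "w\<^sub>2.incoming t v"
  have coupled_v: "qminus_coupled X (w\<^sub>1.state t v) (w\<^sub>2.state t v)"
    by (rule coupled_t)
  interpret node: qminus_coupled_node Q "alpha v" "\<lambda>Z. v \<in> seeds SA SB Z" "\<lambda>Z. v \<in> seeds TA TB Z"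
    ?s\<^sub>1 ?s\<^sub>2 "first_occurrences ?i\<^sub>1" "first_occurrences ?i\<^sub>2" X
  proof
    show "gap_Qminus Q" by (rule Qminus)
    show "qminus_consistent Q (alpha v) (\<lambda>Z. v \<in> seeds SA SB Z) ?s\<^sub>1"
      by (rule w\<^sub>1.qminus_consistent_state[OF Qminus])
    show "qminus_consistent Q (alpha v) (\<lambda>Z. v \<in> seeds TA TB Z) ?s\<^sub>2"
      by (rule w\<^sub>2.qminus_consistent_state[OF Qminus])
    show "?s\<^sub>1 X = Adopted \<longrightarrow> ?s\<^sub>2 X = Adopted" "?s\<^sub>2 (other X) = Adopted \<longrightarrow> ?s\<^sub>1 (other X) = Adopted"
      "?s\<^sub>1 X \<noteq> Idle \<longrightarrow> ?s\<^sub>2 X \<noteq> Idle" "?s\<^sub>2 (other X) \<noteq> Idle \<longrightarrow> ?s\<^sub>1 (other X) \<noteq> Idle"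
      using coupled_v unfolding qminus_coupled_def by blast+
    show "X \<in> set (first_occurrences ?i\<^sub>1) \<longrightarrow> X \<in> set (first_occurrences ?i\<^sub>2) \<or> ?s\<^sub>2 X \<noteq> Idle"
      using X_informs unfolding set_first_occurrences w\<^sub>1.incoming_iff w\<^sub>2.incoming_iff by blast
    show "other X \<in> set (first_occurrences ?i\<^sub>2) \<longrightarrow>
        other X \<in> set (first_occurrences ?i\<^sub>1) \<or> ?s\<^sub>1 (other X) \<noteq> Idle"
      using Y_informs unfolding set_first_occurrences w\<^sub>1.incoming_iff w\<^sub>2.incoming_iff by blast
    show "?s\<^sub>2 X = Idle \<and> ?s\<^sub>1 (other X) = Idle \<longrightarrow> \<not> (first_occurrences ?i\<^sub>1 \<noteq> [] \<and>
        hd (first_occurrences ?i\<^sub>1) = X \<and> first_occurrences ?i\<^sub>2 \<noteq> [] \<and> hd (first_occurrences ?i\<^sub>2) = other X)"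
      using incoming_order by simp
  qed (rule first_occurrences_cases)+
  show ?thesis
    using node.X_adopted_step node.Y_adopted_step node.X_not_idle_step node.Y_not_idle_step
      node.order_step
    unfolding qminus_coupled_def w\<^sub>1.state_Suc w\<^sub>2.state_Suc fold_informed_first_occurrences
    by blast
qed

end

lemma coupled: "qminus_coupled X (w\<^sub>1.state t v) (w\<^sub>2.state t v)"
  by (induction t arbitrary: v) (auto intro: coupled_0 coupled_Suc)

end

section \<open>Expected number of adopters\<close>

lemma UNIV_item: "(UNIV :: item set) = {IA, IB}"
  using item.exhaust by blast

lemma prob_space_comic_space: "prob_space (comic_space V E p)"
  unfolding comic_space_def threshold_measure_def
  by (intro prob_space_pair prob_space_measure_pmf prob_space_PiM prob_space_uniform_measure) auto

lemma comic_run_threshold_cong: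
  assumes "\<And>v X. (\<alpha> v X \<le> q_cond Q X \<longleftrightarrow> \<beta> v X \<le> q_cond Q X) \<and> (\<alpha> v X \<le> q_empty Q X \<longleftrightarrow> \<beta> v X \<le> q_empty Q X)"
  shows "comic_run Q SA SB L perm tau \<alpha> t = comic_run Q SA SB L perm tau \<beta> t"
proof (induction t)
  case (Suc t)
  have "informed Q (\<alpha> v) = informed Q (\<beta> v)" for v
  proof -
    have "(\<alpha> v X \<le> q_cond Q X) = (\<beta> v X \<le> q_cond Q X)" "(\<alpha> v X \<le> q_empty Q X) = (\<beta> v X \<le> q_empty Q X)"
      for X using assms by blast+
    then show ?thesis unfolding informed_def by (simp only:)
  qed
  then show ?case using Suc by (simp add: comic_step_def)
qed simp

lemma measurable_pair_pmf_countable_factor: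
  fixes f :: "'a \<times> 'b \<Rightarrow> real"
  assumes countable: "countable (h ` space N)"
    and pred: "\<And>c. Measurable.pred N (\<lambda>y. h y = c)"
    and factor: "\<And>x y y'. y \<in> space N \<Longrightarrow> y' \<in> space N \<Longrightarrow> h y = h y' \<Longrightarrow> f (x, y) = f (x, y')"
  shows "f \<in> borel_measurable (measure_pmf P \<Otimes>\<^sub>M N)"
proof -
  let ?M = "measure_pmf P \<Otimes>\<^sub>M N"
  define rep where "rep c = (SOME y. y \<in> space N \<and> h y = c)" for c
  have rep: "rep (h y) \<in> space N \<and> h (rep (h y)) = h y" if "y \<in> space N" for y
    unfolding rep_def by (rule someI_ex[of "\<lambda>y'. y' \<in> space N \<and> h y' = h y"]) (use that in blast)
  have "(\<lambda>z. f (fst z, rep (h (snd z)))) \<in> borel_measurable ?M"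
  proof (rule measurable_compose_countable'[where f="\<lambda>c z. f (fst z, rep c)" and g="\<lambda>z. h (snd z)",
        OF _ _ countable])
    show "(\<lambda>z. f (fst z, rep c)) \<in> borel_measurable ?M" for c
      by (rule measurable_compose[OF measurable_fst]) simp
    show "(\<lambda>z. h (snd z)) \<in> ?M \<rightarrow>\<^sub>M count_space (h ` space N)"
      unfolding measurable_count_space_eq_countable[OF countable]
    proof
      show "(\<lambda>z. h (snd z)) \<in> space ?M \<rightarrow> h ` space N" by (auto simp: space_pair_measure)
      show "\<forall>c\<in>h ` space N. (\<lambda>z. h (snd z)) -` {c} \<inter> space ?M \<in> sets ?M"
      proof
        fix c
        have "{z \<in> space ?M. h (snd z) = c} \<in> sets ?M"
          by (rule predE[OF measurable_compose[OF measurable_snd pred]])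
        moreover have "(\<lambda>z. h (snd z)) -` {c} \<inter> space ?M = {z \<in> space ?M. h (snd z) = c}" by auto
        ultimately show "(\<lambda>z. h (snd z)) -` {c} \<inter> space ?M \<in> sets ?M" by simp
      qed
    qed
  qed
  moreover have "f (fst z, rep (h (snd z))) = f z" if "z \<in> space ?M" for z
  proof -
    obtain x y where z: "z = (x, y)" by (cases z)
    have "y \<in> space N" using that z by (simp add: space_pair_measure)
    then show ?thesis using z rep factor[of "rep (h y)" y x] by simp
  qed
  ultimately show ?thesis
    using measurable_cong[of ?M "\<lambda>z. f (fst z, rep (h (snd z)))" f borel] by blast
qed

text \<open>The run depends on the thresholds only through the pattern of comparisons with the GAPs.\<close>

definition threshold_pattern :: "gap \<Rightarrow> 'v set \<Rightarrow> ('v \<Rightarrow> item \<Rightarrow> real) \<Rightarrow> 'v \<Rightarrow> item \<Rightarrow> bool \<times> bool" where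
  "threshold_pattern Q V \<alpha> = (\<lambda>v\<in>V. \<lambda>X. (\<alpha> v X \<le> q_cond Q X, \<alpha> v X \<le> q_empty Q X))"

lemma threshold_pattern_eq_iff:
  "threshold_pattern Q V \<alpha> = c \<longleftrightarrow> c \<in> extensional V \<and>
    (\<forall>v\<in>V. \<forall>X\<in>{IA, IB}. fst (c v X) = (\<alpha> v X \<le> q_cond Q X) \<and> snd (c v X) = (\<alpha> v X \<le> q_empty Q X))"
  unfolding threshold_pattern_def UNIV_item[symmetric]
  by (auto simp: fun_eq_iff prod_eq_iff extensional_def)

lemma finite_range_threshold_pattern:
  assumes "finite V"
  shows "finite (range (threshold_pattern Q V))"
proof -
  have "finite (UNIV :: item set)" by (simp add: UNIV_item)
  then have "finite (UNIV :: (item \<Rightarrow> bool \<times> bool) set)"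
    using finite_PiE[of "UNIV :: item set" "\<lambda>_. UNIV :: (bool \<times> bool) set"] by simp
  then have "finite (V \<rightarrow>\<^sub>E (UNIV :: (item \<Rightarrow> bool \<times> bool) set))"
    using assms by (intro finite_PiE) auto
  moreover have "range (threshold_pattern Q V) \<subseteq> V \<rightarrow>\<^sub>E UNIV"
    by (auto simp: threshold_pattern_def)
  ultimately show ?thesis by (rule finite_subset[rotated])
qed

lemma comic_run_threshold_pattern_cong:
  assumes "\<alpha> \<in> space (threshold_measure V)" "\<beta> \<in> space (threshold_measure V)"
    and "threshold_pattern Q V \<alpha> = threshold_pattern Q V \<beta>"
  shows "comic_run Q SA SB L perm tau \<alpha> t = comic_run Q SA SB L perm tau \<beta> t"
proof (rule comic_run_threshold_cong)
  fix v X
  show "(\<alpha> v X \<le> q_cond Q X \<longleftrightarrow> \<beta> v X \<le> q_cond Q X) \<and> (\<alpha> v X \<le> q_empty Q X \<longleftrightarrow> \<beta> v X \<le> q_empty Q X)"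
  proof (cases "v \<in> V")
    case True
    have "threshold_pattern Q V \<alpha> v X = threshold_pattern Q V \<beta> v X" using assms(3) by simp
    with True show ?thesis by (simp add: threshold_pattern_def)
  next
    case False
    have "space (threshold_measure V) = (\<Pi>\<^sub>E v\<in>V. \<Pi>\<^sub>E X\<in>UNIV. UNIV)"
      unfolding threshold_measure_def by (simp add: space_PiM)
    then have "\<alpha> v = \<beta> v"
      using assms(1,2) PiE_arb[OF _ False] by metis
    then show ?thesis by simp
  qed
qed

lemma pred_threshold_pattern_eq:
  assumes "finite V"
  shows "Measurable.pred (threshold_measure V) (\<lambda>\<alpha>. threshold_pattern Q V \<alpha> = c)"
proof -
  have [measurable]: "(\<lambda>\<alpha>. \<alpha> v X) \<in> borel_measurable (threshold_measure V)" if "v \<in> V" for v X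
  proof -
    have "(\<lambda>\<alpha>. \<alpha> v X) \<in> threshold_measure V \<rightarrow>\<^sub>M uniform_measure lborel {0..1::real}"
      unfolding threshold_measure_def
      by (rule measurable_compose[OF measurable_component_singleton[OF that]
            measurable_component_singleton]) simp
    then show ?thesis by (simp cong: measurable_cong_sets)
  qed
  note [measurable] = assms
  show ?thesis unfolding threshold_pattern_eq_iff by measurable
qed

definition adopted_count :: "'v set \<Rightarrow> gap \<Rightarrow> 'v set \<Rightarrow> 'v set
    \<Rightarrow> ((('v \<times> 'v) set \<times> ('v \<Rightarrow> 'v list) \<times> ('v \<Rightarrow> item)) \<times> ('v \<Rightarrow> item \<Rightarrow> real)) \<Rightarrow> real" where
  "adopted_count V Q SA SB \<omega> = (case \<omega> of ((L, perm, tau), alpha) \<Rightarrow>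
     real (card (V \<inter> adopted_final Q SA SB L perm tau alpha IA)))"

lemma sigma_A_eq_integral: "sigma_A V E p Q SA SB = (\<integral>\<omega>. adopted_count V Q SA SB \<omega> \<partial>comic_space V E p)"
  unfolding sigma_A_def adopted_count_def ..

lemma integrable_adopted_count:
  assumes "finite V"
  shows "integrable (comic_space V E p) (adopted_count V Q SA SB)"
proof -
  interpret prob_space "comic_space V E p" by (rule prob_space_comic_space)
  have "countable (threshold_pattern Q V ` space (threshold_measure V))"
    using finite_range_threshold_pattern[OF assms]
    by (rule countable_finite[OF finite_subset, rotated]) auto
  then have "adopted_count V Q SA SB \<in> borel_measurable (comic_space V E p)"
    unfolding comic_space_def
  proof (rule measurable_pair_pmf_countable_factor)
    show "Measurable.pred (threshold_measure V) (\<lambda>\<alpha>. threshold_pattern Q V \<alpha> = c)" for c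
      using assms by (rule pred_threshold_pattern_eq)
    show "adopted_count V Q SA SB (w, \<alpha>) = adopted_count V Q SA SB (w, \<beta>)"
      if "\<alpha> \<in> space (threshold_measure V)" "\<beta> \<in> space (threshold_measure V)"
        "threshold_pattern Q V \<alpha> = threshold_pattern Q V \<beta>" for w \<alpha> \<beta>
      using comic_run_threshold_pattern_cong[OF that]
      by (cases w) (simp add: adopted_count_def adopted_final_def)
  qed
  moreover have "AE \<omega> in comic_space V E p. norm (adopted_count V Q SA SB \<omega>) \<le> real (card V)"
    by (intro AE_I2) (auto simp: adopted_count_def assms card_mono split: prod.splits)
  ultimately show ?thesis by (intro integrable_const_bound)
qed

lemma sigma_A_mono_if_adopted_final_mono:
  fixes V :: "'v set"
  assumes "finite V"
    and "\<And>L perm tau alpha. adopted_final Q SA SB L perm tau alpha IA \<subseteq> adopted_final Q TA TB L perm tau alpha IA"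
  shows "sigma_A V E p Q SA SB \<le> sigma_A V E p Q TA TB"
  unfolding sigma_A_eq_integral
proof (rule integral_mono[OF integrable_adopted_count[OF assms(1)] integrable_adopted_count[OF assms(1)]])
  fix \<omega> :: "(('v \<times> 'v) set \<times> ('v \<Rightarrow> 'v list) \<times> ('v \<Rightarrow> item)) \<times> ('v \<Rightarrow> item \<Rightarrow> real)"
  obtain L perm tau alpha where \<omega>: "\<omega> = ((L, perm, tau), alpha)" by (metis prod.exhaust)
  show "adopted_count V Q SA SB \<omega> \<le> adopted_count V Q TA TB \<omega>"
    using assms(1) assms(2)[of L perm tau alpha]
    by (auto simp: \<omega> adopted_count_def intro!: card_mono)
qed

lemma adopted_final_mono_Qplus:
  assumes "gap_Qplus Q" "SA \<subseteq> TA" "SB \<subseteq> TB"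
  shows "adopted_final Q SA SB L perm tau alpha X \<subseteq> adopted_final Q TA TB L perm tau alpha X"
  unfolding adopted_final_def using qplus_adopted_mono[OF assms] by blast

lemma adopted_final_mono_Qminus:
  assumes "gap_Qminus Q" "SA \<subseteq> TA"
  shows "adopted_final Q SA SB L perm tau alpha IA \<subseteq> adopted_final Q TA SB L perm tau alpha IA"
proof -
  interpret qminus_coupled_worlds Q SA SB TA SB L perm tau alpha IA
    using assms by unfold_locales (auto simp: seeds_def)
  show ?thesis using coupled unfolding adopted_final_def qminus_coupled_def by blast
qed

lemma adopted_final_antimono_Qminus:
  assumes "gap_Qminus Q" "SB \<subseteq> TB"
  shows "adopted_final Q SA TB L perm tau alpha IA \<subseteq> adopted_final Q SA SB L perm tau alpha IA"
proof -
  interpret qminus_coupled_worlds Q SA SB SA TB L perm tau alpha IB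
    using assms by unfold_locales (auto simp: seeds_def)
  show ?thesis using coupled unfolding adopted_final_def qminus_coupled_def by auto
qed

theorem theorem3:
  fixes V :: "'v set" and E :: "('v \<times> 'v) set" and p :: "'v \<times> 'v \<Rightarrow> real" and Q :: gap
  assumes "finite V" and "E \<subseteq> V \<times> V" and "\<forall>e\<in>E. 0 \<le> p e \<and> p e \<le> 1"
    and "gap_valid Q"
  shows "((gap_Qplus Q \<or> gap_Qminus Q) \<longrightarrow>
           (\<forall>SB SA TA. SB \<subseteq> V \<and> SA \<subseteq> TA \<and> TA \<subseteq> V \<longrightarrow>
             sigma_A V E p Q SA SB \<le> sigma_A V E p Q TA SB))
       \<and> (gap_Qplus Q \<longrightarrow>
           (\<forall>SA SB TB. SA \<subseteq> V \<and> SB \<subseteq> TB \<and> TB \<subseteq> V \<longrightarrow>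
             sigma_A V E p Q SA SB \<le> sigma_A V E p Q SA TB))
       \<and> (gap_Qminus Q \<longrightarrow>
           (\<forall>SA SB TB. SA \<subseteq> V \<and> SB \<subseteq> TB \<and> TB \<subseteq> V \<longrightarrow>
             sigma_A V E p Q SA TB \<le> sigma_A V E p Q SA SB))"
proof (intro conjI impI allI)
  fix SB SA TA :: "'v set"
  assume "gap_Qplus Q \<or> gap_Qminus Q" "SB \<subseteq> V \<and> SA \<subseteq> TA \<and> TA \<subseteq> V"
  then have "adopted_final Q SA SB L perm tau alpha IA \<subseteq> adopted_final Q TA SB L perm tau alpha IA"
    for L perm tau alpha
    using adopted_final_mono_Qplus[of Q SA TA SB SB] adopted_final_mono_Qminus[of Q SA TA] by blast
  then show "sigma_A V E p Q SA SB \<le> sigma_A V E p Q TA SB"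
    by (rule sigma_A_mono_if_adopted_final_mono[OF assms(1)])
next
  fix SA SB TB :: "'v set"
  assume "gap_Qplus Q" "SA \<subseteq> V \<and> SB \<subseteq> TB \<and> TB \<subseteq> V"
  then show "sigma_A V E p Q SA SB \<le> sigma_A V E p Q SA TB"
    by (intro sigma_A_mono_if_adopted_final_mono[OF assms(1)] adopted_final_mono_Qplus) auto
next
  fix SA SB TB :: "'v set"
  assume "gap_Qminus Q" "SA \<subseteq> V \<and> SB \<subseteq> TB \<and> TB \<subseteq> V"
  then show "sigma_A V E p Q SA TB \<le> sigma_A V E p Q SA SB"
    by (intro sigma_A_mono_if_adopted_final_mono[OF assms(1)] adopted_final_antimono_Qminus) auto
qed

end
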